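(* Consider the problem $$\min_{x_0\in\mathbb{R}^{n_0},\ldots,x_L\in\mathbb{R}^{n_L}}\ f(x_0,\ldots,x_L)+\sum_{l=1}^L\gamma_lT_{K_l,n_l,1}(x_l)+\delta_{\mathcal{C}}(x_0,\ldots,x_L),$$ where $\mathcal{C}\subset\mathrm{dom} f$ and $f+\delta_{\mathcal{C}}$ is directionally differentiable, and let $x^*=(x_0^*,\ldots,x_L^* )$ be a d-stationary point. Fix $l\in[L]$ and suppose: (B1) for every $x=(x_0,\ldots,x_L)\in\mathcal{C}$ and every $i\in[n_l]$, the direction $(0,\ldots,0,-(x_l)_ie_i,0,\ldots,0)$ (nonzero only in block $l$) belongs to $\mathcal{F}(x;\mathcal{C})$; (B2) there is $\Gamma_l>0$ such that $(f+\delta_{\mathcal C})'(x^*;(0,\ldots,d_l,\ldots,0))\le\Gamma_l$ for all $d_l\in\{-1,0,1\}^{n_l}$ with $\|d_l\|_1=1$ and $(0,\ldots,d_l,\ldots,0)\in\mathcal{F}(x^*;\mathcal{C})$. If $\gamma_l>\Gamma_l$, then $T_{K_l,n_l,1}(x_l^* )=0$.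
   Context: $T_{K,n,1}(x)$ is the sum of the $n-K$ smallest values among $|x_1|,\ldots,|x_n|$; $K_l\in\{0,\ldots,n_l-1\}$, $\gamma_l>0$, $n_0\ge0$. $\delta_{\mathcal C}$ is the indicator function of $\mathcal{C}$ (0 on $\mathcal C$, $+\infty$ outside); $f$ takes values in $(-\infty,\infty]$ and $\mathrm{dom} f=\{x\mid f(x)<\infty\}$. $e_i$ is the $i$-th unit vector. Feasible cone: $\mathcal{F}(x;\mathcal{C})=\{d\mid \exists\varsigma'>0:\ x+\varsigma d\in\mathcal{C}\ \forall\varsigma\in(0,\varsigma')\}$ for $x\in\mathcal C$. Directional derivative $h'(x;d)=\lim_{\varsigma\searrow0}(h(x+\varsigma d)-h(x))/\varsigma$; directional differentiability means it exists in $\mathbb{R}$ for $x\in\mathrm{dom}\,h$, $d\in\mathcal F(x;\mathrm{dom}\,h)$. $x^*$ is d-stationary if the objective's directional derivative at $x^*$ is $\ge0$ for all $d\in\mathcal{F}(x^*;\mathcal{C})$. *)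

theory Defs
  imports "HOL-Analysis.Analysis"
begin

text \<open>Points (x_0,...,x_L) with x_l in R^{n_l} are modelled as functions
  x :: nat => nat => real, where x l i is the i-th coordinate (i < n l) of block l
  (0 <= l <= L); all other entries are zero (see block_space).\<close>

type_synonym point = "nat \<Rightarrow> nat \<Rightarrow> real"

definition block_space :: "nat \<Rightarrow> (nat \<Rightarrow> nat) \<Rightarrow> point set" where
  "block_space L n = {x. \<forall>l i. (L < l \<or> n l \<le> i) \<longrightarrow> x l i = 0}"

definition padd :: "point \<Rightarrow> real \<Rightarrow> point \<Rightarrow> point" where
  "padd x s d = (\<lambda>l i. x l i + s * d l i)"

definition trimmed_l1 :: "nat \<Rightarrow> nat \<Rightarrow> (nat \<Rightarrow> real) \<Rightarrow> real" where
  "trimmed_l1 K n v = sum_list (take (n - K) (sort (map (\<lambda>i. \<bar>v i\<bar>) [0..<n])))"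

definition indicator_fun :: "point set \<Rightarrow> point \<Rightarrow> ereal" where
  "indicator_fun C x = (if x \<in> C then 0 else \<infinity>)"

definition edom :: "(point \<Rightarrow> ereal) \<Rightarrow> point set" where
  "edom h = {x. h x < \<infinity>}"

definition feasible_cone :: "point \<Rightarrow> point set \<Rightarrow> point set" where
  "feasible_cone x C = {d. \<exists>s'>0. \<forall>s. 0 < s \<and> s < s' \<longrightarrow> padd x s d \<in> C}"

definition has_dir_deriv :: "(point \<Rightarrow> ereal) \<Rightarrow> point \<Rightarrow> point \<Rightarrow> real \<Rightarrow> bool" where
  "has_dir_deriv h x d D \<longleftrightarrow>
     ((\<lambda>s. (h (padd x s d) - h x) / ereal s) \<longlongrightarrow> ereal D) (at_right 0)"

definition dir_deriv :: "(point \<Rightarrow> ereal) \<Rightarrow> point \<Rightarrow> point \<Rightarrow> ereal" where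
  "dir_deriv h x d = Lim (at_right 0) (\<lambda>s. (h (padd x s d) - h x) / ereal s)"

definition dir_differentiable :: "(point \<Rightarrow> ereal) \<Rightarrow> bool" where
  "dir_differentiable h \<longleftrightarrow>
     (\<forall>x \<in> edom h. \<forall>d \<in> feasible_cone x (edom h). \<exists>D. has_dir_deriv h x d D)"

definition d_stationary :: "(point \<Rightarrow> ereal) \<Rightarrow> point set \<Rightarrow> point \<Rightarrow> bool" where
  "d_stationary F C x \<longleftrightarrow> x \<in> C \<and> (\<forall>d \<in> feasible_cone x C. dir_deriv F x d \<ge> 0)"

definition embed_block :: "(nat \<Rightarrow> nat) \<Rightarrow> nat \<Rightarrow> (nat \<Rightarrow> real) \<Rightarrow> point" where
  "embed_block n l v = (\<lambda>l' j. if l' = l \<and> j < n l then v j else 0)"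

end

theory Submission
  imports Defs "HOL-Library.Multiset"
begin

text \<open>If \<open>T\<^sub>K\<^sub>,\<^sub>n\<^sub>,\<^sub>1(x\<^sub>l\<^sup>*) \<noteq> 0\<close>, let \<open>x\<^sub>l\<^sub>i\<^sup>*\<close> be an entry of smallest nonzero modulus. Among the
  sorted moduli it sits inside the first \<open>n\<^sub>l - K\<^sub>l\<close> positions, directly after the zeros,
  so shrinking \<open>|x\<^sub>l\<^sub>i\<^sup>*|\<close> by a small \<open>s\<close> leaves the sorted order unchanged and lowers
  \<open>T\<^sub>K\<^sub>,\<^sub>n\<^sub>,\<^sub>1\<close> by exactly \<open>s\<close>. The direction \<open>v = -sgn(x\<^sub>l\<^sub>i\<^sup>*) e\<^sub>i\<close> in block \<open>l\<close> is a positive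
  multiple of the direction of (B1), hence feasible, and is admissible in (B2). So the
  objective has directional derivative at most \<open>\<Gamma>\<^sub>l - \<gamma>\<^sub>l < 0\<close> along \<open>v\<close>, contradicting
  d-stationarity.\<close>

lemma sum_list_list_update:
  fixes xs :: "'a::ab_group_add list"
  shows "k < length xs \<Longrightarrow> sum_list (xs[k := x]) = sum_list xs + x - xs ! k"
proof (induction xs arbitrary: k)
  case Nil then show ?case by simp
next
  case (Cons a xs) then show ?case by (cases k) (auto simp: algebra_simps)
qed

lemma sort_list_update_eq:
  fixes a :: "'a::linorder list"
  assumes "p < length (sort a)" "i < length a" "a ! i = sort a ! p"
    and "\<forall>j<p. sort a ! j \<le> w" "w \<le> sort a ! p"
  shows "sort (a[i := w]) = (sort a)[p := w]"
proof (rule properties_for_sort)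
  let ?sa = "sort a"
  show "mset ((sort a)[p := w]) = mset (a[i := w])"
    using assms by (simp add: mset_update)
  have mono: "\<And>x y. x \<le> y \<Longrightarrow> y < length ?sa \<Longrightarrow> ?sa ! x \<le> ?sa ! y"
    by (simp add: sorted_nth_mono)
  show "sorted (?sa[p := w])"
    unfolding sorted_iff_nth_mono_less
  proof (intro allI impI)
    fix x y assume xy: "x < y" "y < length (?sa[p := w])"
    show "?sa[p := w] ! x \<le> ?sa[p := w] ! y"
      using xy assms(4,5) mono[of p y] mono[of x y]
      by (cases "x = p"; cases "y = p") (auto simp: nth_list_update)
  qed
qed

lemma sum_take_sort_lower_min_positive:
  fixes a :: "real list"
  assumes nonneg: "\<forall>x\<in>set a. 0 \<le> x" and nz: "sum_list (take k (sort a)) \<noteq> 0"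
  obtains i where "i < length a" "0 < a ! i"
    "\<And>w. 0 \<le> w \<Longrightarrow> w \<le> a ! i \<Longrightarrow>
       sum_list (take k (sort (a[i := w]))) = sum_list (take k (sort a)) - a ! i + w"
proof -
  let ?sa = "sort a"
  have "\<exists>x\<in>set (take k ?sa). x \<noteq> 0"
  proof -
    have "\<forall>x\<in>set (take k ?sa). 0 \<le> x" using nonneg by (auto dest: in_set_takeD)
    then show ?thesis using nz sum_list_nonneg_eq_0_iff[of "take k ?sa"] by blast
  qed
  then obtain j0 where j0: "j0 < k" "j0 < length ?sa" "?sa ! j0 \<noteq> 0"
    by (auto simp: in_set_conv_nth)
  define p where "p = (LEAST j. j < length ?sa \<and> ?sa ! j \<noteq> 0)"
  have p: "p < length ?sa" "?sa ! p \<noteq> 0" "p \<le> j0"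
    using LeastI[of "\<lambda>j. j < length ?sa \<and> ?sa ! j \<noteq> 0" j0] Least_le[of _ j0] j0
    unfolding p_def by auto
  have zeros: "\<forall>j<p. ?sa ! j = 0"
    using not_less_Least p(1) unfolding p_def by force
  have "?sa ! p \<in> set a" using nth_mem[OF p(1)] by simp
  then obtain i where i: "i < length a" "a ! i = ?sa ! p" by (auto simp: in_set_conv_nth)
  have "0 \<le> a ! i" using nonneg nth_mem[OF i(1)] by blast
  then have pos: "0 < a ! i" using i(2) p(2) by linarith
  show thesis
  proof (rule that[OF i(1) pos])
    fix w :: real assume w: "0 \<le> w" "w \<le> a ! i"
    have "sort (a[i := w]) = ?sa[p := w]"
      using p(1) i w zeros by (intro sort_list_update_eq) auto
    then have "take k (sort (a[i := w])) = (take k ?sa)[p := w]"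
      by (simp add: take_update_swap)
    then show "sum_list (take k (sort (a[i := w]))) = sum_list (take k ?sa) - a ! i + w"
      using p j0 i by (simp add: sum_list_list_update)
  qed
qed

lemma trimmed_l1_lower_min_nonzero:
  assumes "trimmed_l1 K n v \<noteq> 0"
  obtains i where "i < n" "v i \<noteq> 0"
    "\<And>w. \<bar>w\<bar> \<le> \<bar>v i\<bar> \<Longrightarrow> trimmed_l1 K n (v(i := w)) = trimmed_l1 K n v - \<bar>v i\<bar> + \<bar>w\<bar>"
proof -
  define a where "a = map (\<lambda>j. \<bar>v j\<bar>) [0..<n]"
  have "trimmed_l1 K n v = sum_list (take (n - K) (sort a))"
    by (simp add: trimmed_l1_def a_def)
  then obtain i where i: "i < length a" "0 < a ! i" and lower:
    "\<And>w. 0 \<le> w \<Longrightarrow> w \<le> a ! i \<Longrightarrow>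
       sum_list (take (n - K) (sort (a[i := w]))) = trimmed_l1 K n v - a ! i + w"
    using sum_take_sort_lower_min_positive[of a "n - K"] assms by (auto simp: a_def)
  have ai: "a ! i = \<bar>v i\<bar>" and "i < n" using i(1) by (simp_all add: a_def)
  show thesis
  proof (rule that[OF \<open>i < n\<close>])
    show "v i \<noteq> 0" using i(2) ai by simp
    fix w assume "\<bar>w\<bar> \<le> \<bar>v i\<bar>"
    moreover have "map (\<lambda>j. \<bar>(v(i := w)) j\<bar>) [0..<n] = a[i := \<bar>w\<bar>]"
      by (rule nth_equalityI) (auto simp: a_def nth_list_update)
    ultimately show "trimmed_l1 K n (v(i := w)) = trimmed_l1 K n v - \<bar>v i\<bar> + \<bar>w\<bar>"
      using lower[of "\<bar>w\<bar>"] ai by (simp add: trimmed_l1_def)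
  qed
qed

lemma sum_change_one_term:
  fixes g h :: "'a \<Rightarrow> 'b::ab_group_add"
  assumes "finite A" "l \<in> A" "\<forall>k\<in>A - {l}. g k = h k"
  shows "sum g A = sum h A - h l + g l"
  using assms by (simp add: sum.remove[of A l] sum.cong[of "A - {l}" _ g h])

lemma penalty_shrink_min_nonzero:
  fixes x :: point
  assumes "finite A" "l \<in> A" "trimmed_l1 (K l) (n l) (x l) \<noteq> 0"
  obtains i where "i < n l" "x l i \<noteq> 0"
    "\<And>s. 0 \<le> s \<Longrightarrow> s \<le> \<bar>x l i\<bar> \<Longrightarrow>
       (\<Sum>k\<in>A. \<gamma> k * trimmed_l1 (K k) (n k)
          (padd x s (embed_block n l (\<lambda>j. if j = i then - sgn (x l i) else 0)) k))
       = (\<Sum>k\<in>A. \<gamma> k * trimmed_l1 (K k) (n k) (x k)) - \<gamma> l * s"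
proof -
  obtain i where i: "i < n l" "x l i \<noteq> 0" and lower: "\<And>w. \<bar>w\<bar> \<le> \<bar>x l i\<bar> \<Longrightarrow>
      trimmed_l1 (K l) (n l) ((x l)(i := w)) = trimmed_l1 (K l) (n l) (x l) - \<bar>x l i\<bar> + \<bar>w\<bar>"
    using trimmed_l1_lower_min_nonzero[OF assms(3)] by blast
  show thesis
  proof (rule that[OF i])
    fix s :: real assume s: "0 \<le> s" "s \<le> \<bar>x l i\<bar>"
    define y where "y = padd x s (embed_block n l (\<lambda>j. if j = i then - sgn (x l i) else 0))"
    have yl: "y l = (x l)(i := x l i - s * sgn (x l i))"
      using i(1) by (auto simp: y_def padd_def embed_block_def)
    have "\<bar>x l i - s * sgn (x l i)\<bar> = \<bar>x l i\<bar> - s"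
      using s by (cases "x l i > 0") (auto simp: sgn_if)
    then have shrunk: "trimmed_l1 (K l) (n l) (y l) = trimmed_l1 (K l) (n l) (x l) - s"
      unfolding yl using lower s by simp
    have "\<forall>k\<in>A - {l}. y k = x k"
      by (auto simp: y_def padd_def embed_block_def)
    then have "(\<Sum>k\<in>A. \<gamma> k * trimmed_l1 (K k) (n k) (y k))
        = (\<Sum>k\<in>A. \<gamma> k * trimmed_l1 (K k) (n k) (x k)) - \<gamma> l * trimmed_l1 (K l) (n l) (x l)
          + \<gamma> l * trimmed_l1 (K l) (n l) (y l)"
      by (intro sum_change_one_term[OF assms(1,2)]) simp
    also have "\<dots> = (\<Sum>k\<in>A. \<gamma> k * trimmed_l1 (K k) (n k) (x k)) - \<gamma> l * s"
      unfolding shrunk by (simp add: algebra_simps)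
    finally show "(\<Sum>k\<in>A. \<gamma> k * trimmed_l1 (K k) (n k) (y k))
        = (\<Sum>k\<in>A. \<gamma> k * trimmed_l1 (K k) (n k) (x k)) - \<gamma> l * s" .
  qed
qed

lemma feasible_cone_scale:
  assumes "d \<in> feasible_cone x C" "0 < c"
  shows "(\<lambda>k j. c * d k j) \<in> feasible_cone x C"
proof -
  obtain s' where s': "0 < s'" "\<forall>s. 0 < s \<and> s < s' \<longrightarrow> padd x s d \<in> C"
    using assms(1) by (auto simp: feasible_cone_def)
  have "padd x s (\<lambda>k j. c * d k j) \<in> C" if "0 < s" "s < s' / c" for s
    using s'(2)[rule_format, of "s * c"] that assms(2)
    by (simp add: padd_def field_simps)
  then show ?thesis
    using s' assms(2) by (auto simp: feasible_cone_def intro!: exI[of _ "s' / c"])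
qed

lemma feasible_cone_eventually:
  assumes "d \<in> feasible_cone x C"
  shows "eventually (\<lambda>s. padd x s d \<in> C) (at_right 0)"
proof -
  obtain s' where "0 < s'" "\<forall>s. 0 < s \<and> s < s' \<longrightarrow> padd x s d \<in> C"
    using assms by (auto simp: feasible_cone_def)
  then show ?thesis
    using eventually_at_right_real[of 0 s'] by (auto elim: eventually_mono)
qed

lemma feasible_cone_mono: "C \<subseteq> D \<Longrightarrow> feasible_cone x C \<subseteq> feasible_cone x D"
  by (fastforce simp: feasible_cone_def)

lemma has_dir_deriv_imp_dir_deriv: "has_dir_deriv h x d D \<Longrightarrow> dir_deriv h x d = ereal D"
  unfolding has_dir_deriv_def dir_deriv_def by (rule tendsto_Lim) simp

lemma has_dir_deriv_add_affine:
  assumes deriv: "has_dir_deriv h x d D" and fin_x: "\<bar>h x\<bar> \<noteq> \<infinity>"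
    and ray: "eventually (\<lambda>s. \<bar>h (padd x s d)\<bar> \<noteq> \<infinity> \<and> g (padd x s d) = g x + c * s) (at_right 0)"
  shows "has_dir_deriv (\<lambda>y. h y + ereal (g y)) x d (D + c)"
proof -
  let ?q = "\<lambda>s. (h (padd x s d) - h x) / ereal s"
  have "eventually (\<lambda>s. (h (padd x s d) + ereal (g (padd x s d)) - (h x + ereal (g x))) / ereal s
      = ?q s + ereal c) (at_right 0)"
    using ray eventually_at_right_less[of 0]
  proof eventually_elim
    case (elim s)
    then obtain a b where "h (padd x s d) = ereal a" "h x = ereal b"
      using fin_x by (cases "h (padd x s d)"; cases "h x") auto
    with elim show ?case by (simp add: field_simps)
  qed
  moreover have "((\<lambda>s. ?q s + ereal c) \<longlongrightarrow> ereal D + ereal c) (at_right 0)"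
    using deriv unfolding has_dir_deriv_def by (intro tendsto_add_ereal) auto
  ultimately show ?thesis
    unfolding has_dir_deriv_def by (simp add: tendsto_cong)
qed

lemma feasible_cone_signed_unit:
  assumes "embed_block n l (\<lambda>j. if j = i then - x l i else 0) \<in> feasible_cone x C" "x l i \<noteq> 0"
  shows "embed_block n l (\<lambda>j. if j = i then - sgn (x l i) else 0) \<in> feasible_cone x C"
proof -
  have "embed_block n l (\<lambda>j. if j = i then - sgn (x l i) else 0)
      = (\<lambda>k j. (1 / \<bar>x l i\<bar>) * embed_block n l (\<lambda>j. if j = i then - x l i else 0) k j)"
    using assms(2) by (auto simp: embed_block_def fun_eq_iff sgn_if)
  also have "\<dots> \<in> feasible_cone x C"
    using assms by (intro feasible_cone_scale) auto
  finally show ?thesis .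
qed

lemma sum_abs_signed_unit:
  fixes a :: real and n :: nat
  assumes "i < n" "a \<noteq> 0"
  shows "(\<Sum>j<n. \<bar>if j = i then - sgn a else 0\<bar>) = 1"
proof -
  have "(\<lambda>j. \<bar>if j = i then - sgn a else 0\<bar>) = (\<lambda>j. if j = i then 1 else 0)"
    using assms(2) by (auto simp: sgn_if)
  then have "(\<Sum>j<n. \<bar>if j = i then - sgn a else 0\<bar>) = (\<Sum>j<n. if j = i then 1 else 0)"
    by (simp only:)
  also have "\<dots> = 1" using assms(1) by simp
  finally show ?thesis .
qed

lemma d_stationary_add_affine:
  assumes stat: "d_stationary (\<lambda>y. f y + ereal (g y) + indicator_fun C y) C x"
    and deriv: "has_dir_deriv (\<lambda>y. f y + indicator_fun C y) x d D"
    and feas: "d \<in> feasible_cone x C"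
    and fin: "\<And>y. y \<in> C \<Longrightarrow> \<bar>f y\<bar> \<noteq> \<infinity>"
    and affine: "eventually (\<lambda>s. g (padd x s d) = g x + c * s) (at_right 0)"
  shows "0 \<le> D + c"
proof -
  let ?h = "\<lambda>y. f y + indicator_fun C y"
  have xC: "x \<in> C" using stat by (simp add: d_stationary_def)
  have h_fin: "\<bar>?h y\<bar> \<noteq> \<infinity>" if "y \<in> C" for y
    using fin[OF that] that by (simp add: indicator_fun_def)
  have "eventually (\<lambda>s. \<bar>?h (padd x s d)\<bar> \<noteq> \<infinity> \<and> g (padd x s d) = g x + c * s) (at_right 0)"
    using feasible_cone_eventually[OF feas] affine by eventually_elim (simp add: h_fin)
  from has_dir_deriv_add_affine[OF deriv h_fin[OF xC] this]
  have "has_dir_deriv (\<lambda>y. f y + ereal (g y) + indicator_fun C y) x d (D + c)"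
    by (simp add: ac_simps)
  then show ?thesis
    using stat feas by (force simp: d_stationary_def has_dir_deriv_imp_dir_deriv)
qed

theorem mainTheorem11:
  fixes L :: nat and n :: "nat \<Rightarrow> nat" and K :: "nat \<Rightarrow> nat" and \<gamma> :: "nat \<Rightarrow> real"
    and f :: "point \<Rightarrow> ereal" and C :: "point set" and xs :: point
    and l :: nat and \<Gamma> :: real
  assumes K: "\<forall>k\<in>{1..L}. K k < n k"
    and gam: "\<forall>k\<in>{1..L}. \<gamma> k > 0"
    and f_ninf: "\<forall>x. f x \<noteq> -\<infinity>"
    and C_sub: "C \<subseteq> block_space L n"
    and C_dom: "C \<subseteq> edom f"
    and dd: "dir_differentiable (\<lambda>x. f x + indicator_fun C x)"
    and stat: "d_stationary
       (\<lambda>x. f x + ereal (\<Sum>k=1..L. \<gamma> k * trimmed_l1 (K k) (n k) (x k)) + indicator_fun C x) C xs"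
    and l: "l \<in> {1..L}"
    and B1: "\<forall>x\<in>C. \<forall>i<n l. embed_block n l (\<lambda>j. if j = i then - x l i else 0) \<in> feasible_cone x C"
    and Gpos: "\<Gamma> > 0"
    and B2: "\<forall>v. (\<forall>i<n l. v i \<in> {-1, 0, 1}) \<and> (\<Sum>i<n l. \<bar>v i\<bar>) = 1
                 \<and> embed_block n l v \<in> feasible_cone xs C
               \<longrightarrow> dir_deriv (\<lambda>x. f x + indicator_fun C x) xs (embed_block n l v) \<le> ereal \<Gamma>"
    and gt: "\<gamma> l > \<Gamma>"
  shows "trimmed_l1 (K l) (n l) (xs l) = 0"
proof (rule ccontr)
  let ?S = "\<lambda>x. \<Sum>k=1..L. \<gamma> k * trimmed_l1 (K k) (n k) (x k)"
  let ?h = "\<lambda>x. f x + indicator_fun C x"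
  assume "trimmed_l1 (K l) (n l) (xs l) \<noteq> 0"
  then obtain i where i: "i < n l" "xs l i \<noteq> 0" and penalty: "\<And>s. 0 \<le> s \<Longrightarrow> s \<le> \<bar>xs l i\<bar> \<Longrightarrow>
      ?S (padd xs s (embed_block n l (\<lambda>j. if j = i then - sgn (xs l i) else 0))) = ?S xs - \<gamma> l * s"
    using penalty_shrink_min_nonzero[of "{1..L}" l K n xs \<gamma>] l by blast
  define v where "v = embed_block n l (\<lambda>j. if j = i then - sgn (xs l i) else 0)"
  have xsC: "xs \<in> C" using stat by (simp add: d_stationary_def)
  have vF: "v \<in> feasible_cone xs C"
    unfolding v_def using B1 xsC i by (intro feasible_cone_signed_unit) auto
  have f_fin: "\<bar>f y\<bar> \<noteq> \<infinity>" if "y \<in> C" for y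
    using that C_dom f_ninf by (auto simp: edom_def)
  have "C \<subseteq> edom ?h" using C_dom by (auto simp: edom_def indicator_fun_def)
  then obtain D where D: "has_dir_deriv ?h xs v D"
    using dd xsC vF feasible_cone_mono unfolding dir_differentiable_def by blast
  have "dir_deriv ?h xs v \<le> ereal \<Gamma>"
    using B2 vF i sum_abs_signed_unit[OF i] unfolding v_def by (auto simp: sgn_if)
  then have "D \<le> \<Gamma>" using has_dir_deriv_imp_dir_deriv[OF D] by simp
  have "?S (padd xs s v) = ?S xs + - \<gamma> l * s" if "0 < s" "s < \<bar>xs l i\<bar>" for s
    using penalty[of s] that unfolding v_def by simp
  moreover have "0 < \<bar>xs l i\<bar>" using i(2) by simp
  ultimately have "eventually (\<lambda>s. ?S (padd xs s v) = ?S xs + - \<gamma> l * s) (at_right 0)"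
    using eventually_at_right_real[of 0 "\<bar>xs l i\<bar>"] by (auto elim!: eventually_mono)
  from d_stationary_add_affine[OF stat D vF f_fin this]
  show False using \<open>D \<le> \<Gamma>\<close> gt by simp
qed

end
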